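(* Let $R$ be a unital regular $K$-algebra, $J$ an ideal of $R$, and $T$ a matricial subalgebra of $R$ such that $R = T \oplus J$ as $K$-vector spaces. Then for every finite subset $Y \subseteq J$ there is an idempotent $e \in J$ such that $Y \subseteq eJe$ and $et = te$ for all $t \in T$.
   Context: $K$ is a field. All algebras are associative $K$-algebras; ideals are two-sided ring ideals that are $K$-subspaces. A ring is regular if for every $x$ there is $y$ with $xyx=x$. A $K$-algebra is matricial if it is isomorphic to $\prod_{i=1}^k M_{n_i}(K)$ for some positive integers $n_1,\dots,n_k$. The subalgebra $T$ need not share the identity of $R$. *)

theory Defs
  imports Main "Jordan_Normal_Form.Matrix"
begin

definition is_algebra :: "('k::field \<Rightarrow> 'r::ring_1 \<Rightarrow> 'r) \<Rightarrow> bool" where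
  "is_algebra sm \<longleftrightarrow> vector_space sm \<and>
     (\<forall>a x y. sm a (x * y) = sm a x * y \<and> sm a (x * y) = x * sm a y)"

definition regular_ring :: "'r::ring_1 itself \<Rightarrow> bool" where
  "regular_ring _ \<longleftrightarrow> (\<forall>x::'r. \<exists>y. x * y * x = x)"

definition alg_ideal :: "('k::field \<Rightarrow> 'r::ring_1 \<Rightarrow> 'r) \<Rightarrow> 'r set \<Rightarrow> bool" where
  "alg_ideal sm J \<longleftrightarrow> module.subspace sm J \<and>
     (\<forall>x\<in>J. \<forall>r. r * x \<in> J \<and> x * r \<in> J)"

text \<open>Subalgebra (not required to contain the identity of R).\<close>
definition subalgebra :: "('k::field \<Rightarrow> 'r::ring_1 \<Rightarrow> 'r) \<Rightarrow> 'r set \<Rightarrow> bool" where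
  "subalgebra sm T \<longleftrightarrow> module.subspace sm T \<and> (\<forall>x\<in>T. \<forall>y\<in>T. x * y \<in> T)"

text \<open>The K-algebra M_{n_0}(K) x ... x M_{n_{k-1}}(K), represented as lists of
  square matrices of the given sizes, with componentwise operations.\<close>
definition matrix_product_carrier :: "nat list \<Rightarrow> 'k::field mat list set" where
  "matrix_product_carrier ns =
     {As. length As = length ns \<and> (\<forall>i<length ns. As ! i \<in> carrier_mat (ns ! i) (ns ! i))}"

definition matricial :: "('k::field \<Rightarrow> 'r::ring_1 \<Rightarrow> 'r) \<Rightarrow> 'r set \<Rightarrow> bool" where
  "matricial sm T \<longleftrightarrow>
     (\<exists>(ns::nat list) (\<phi>::'r \<Rightarrow> 'k mat list).
        (\<forall>i<length ns. ns ! i > 0) \<and>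
        bij_betw \<phi> T (matrix_product_carrier ns) \<and>
        (\<forall>x\<in>T. \<forall>y\<in>T. \<forall>i<length ns.
            \<phi> (x + y) ! i = \<phi> x ! i + \<phi> y ! i \<and>
            \<phi> (x * y) ! i = \<phi> x ! i * \<phi> y ! i) \<and>
        (\<forall>a. \<forall>x\<in>T. \<forall>i<length ns. \<phi> (sm a x) ! i = a \<cdot>\<^sub>m (\<phi> x ! i)))"

end

theory Submission
  imports Defs
begin

text \<open>
  In a regular ring an ideal \<open>J\<close> has local units: for an idempotent \<open>c\<close> and finitely many
  \<open>a \<in> cJ\<close> and \<open>b \<in> Jc\<close> there is an idempotent \<open>e \<in> cJc\<close> with \<open>ea = a\<close> and \<open>be = b\<close>.
  To adjoin one more element \<open>b\<close>, pick \<open>x\<close> with \<open>bxb = b\<close>; then \<open>bxc\<close> is an idempotent fixing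
  \<open>b\<close>, and idempotents \<open>p, q\<close> with \<open>pqp = pq\<close> combine to the idempotent \<open>p + q - qp\<close>.

  Let \<open>E k i j\<close> be the matrix units of \<open>T\<close> and \<open>v = 1 - (\<Sum>k i. E k i i)\<close>. An element
  \<open>(\<Sum>k i. E k i 0 * f k * E k 0 i) + f0\<close> with \<open>f k \<in> E k 0 0 R E k 0 0\<close> and \<open>f0 \<in> vRv\<close> commutes
  with all matrix units, hence with \<open>T\<close>, which they span over \<open>K\<close>; it is an idempotent of \<open>J\<close>
  when the \<open>f k\<close> and \<open>f0\<close> are. Choosing \<open>f k\<close> as a local unit in \<open>E k 0 0 J E k 0 0\<close> for the
  elements \<open>E k 0 i y\<close>, \<open>y E k i 0\<close> and \<open>f0\<close> as one in \<open>vJv\<close> for \<open>vy\<close>, \<open>yv\<close> (\<open>y \<in> Y\<close>)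
  makes it a two-sided unit for \<open>Y\<close>.
\<close>

lemma idempotent_add_diff_mult:
  fixes p q :: "'r::ring_1"
  assumes "p * p = p" "q * q = q" "p * q * p = p * q"
  shows "(p + q - q * p) * (p + q - q * p) = p + q - q * p"
proof -
  have "q * p * q * p = q * p * q"
    using assms(3) by (metis mult.assoc)
  moreover have "q * p * p = q * p"
    using assms(1) by (simp add: mult.assoc)
  ultimately show ?thesis
    using assms by (simp add: algebra_simps flip: mult.assoc)
qed

locale regular_ring_ideal =
  fixes J :: "'r::ring_1 set"
  assumes regular: "\<exists>y. x * y * x = x"
    and zero_mem: "0 \<in> J"
    and add_mem: "x \<in> J \<Longrightarrow> y \<in> J \<Longrightarrow> x + y \<in> J"
    and mult_left_mem: "x \<in> J \<Longrightarrow> r * x \<in> J"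
    and mult_right_mem: "x \<in> J \<Longrightarrow> x * r \<in> J"
begin

lemma diff_mem: "x \<in> J \<Longrightarrow> y \<in> J \<Longrightarrow> x - y \<in> J"
  using add_mem[of x "(-1) * y"] mult_left_mem[of y "-1"] by simp

lemma sum_mem: "(\<And>x. x \<in> A \<Longrightarrow> g x \<in> J) \<Longrightarrow> sum g A \<in> J"
  by (induction A rule: infinite_finite_induct) (auto intro: zero_mem add_mem)

lemma idempotent_add_diff_mult_mem:
  "p \<in> J \<Longrightarrow> q \<in> J \<Longrightarrow> p + q - q * p \<in> J"
  by (intro diff_mem add_mem mult_left_mem)

lemma local_left_unit:
  assumes "c * c = c" "finite A" "\<forall>a\<in>A. a \<in> J \<and> c * a = a"
  shows "\<exists>p\<in>J. p * p = p \<and> c * p = p \<and> p * c = p \<and> (\<forall>a\<in>A. p * a = a)"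
  using assms(2,3)
proof (induction A rule: finite_induct)
  case empty
  show ?case using zero_mem by (intro bexI[of _ 0]) auto
next
  case (insert a A)
  then obtain p where pJ: "p \<in> J" and pp: "p * p = p" and cp: "c * p = p" and pc: "p * c = p"
    and pA: "\<forall>a\<in>A. p * a = a" by auto
  have aJ: "a \<in> J" and ca: "c * a = a" using insert.prems by auto
  define b where "b = a - p * a"
  obtain x where bxb: "b * x * b = b" using regular by blast
  define q where "q = b * x * c"
  have cb: "c * b = b" and pb: "p * b = 0"
    unfolding b_def using ca cp pp by (simp_all add: right_diff_distrib flip: mult.assoc)
  have qJ: "q \<in> J" unfolding q_def b_def using aJ pJ by (intro mult_right_mem diff_mem mult_left_mem)
  have qq: "q * q = q" and cq: "c * q = q" and qc: "q * c = q" and qb: "q * b = b" and pq: "p * q = 0"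
    unfolding q_def using cb bxb pb assms(1) by (simp_all flip: mult.assoc) (simp_all add: mult.assoc)
  define f where "f = p + q - q * p"
  have ff: "f * f = f"
    unfolding f_def using pp qq pq by (intro idempotent_add_diff_mult) simp_all
  have fp: "f * p = p" and fb: "f * b = b"
    unfolding f_def using pp pq qb pb by (simp_all add: algebra_simps flip: mult.assoc) (simp_all add: mult.assoc)
  have "f * a = f * p * a + f * b"
    unfolding b_def by (simp add: right_diff_distrib mult.assoc)
  then have "f * a = a" using fp fb unfolding b_def by simp
  moreover have "\<forall>a'\<in>A. f * a' = a'" using pA fp by (metis mult.assoc)
  moreover have "c * f = f"
    unfolding f_def using cp cq by (simp add: algebra_simps flip: mult.assoc)
  moreover have "f * c = f"
    unfolding f_def using pc qc by (simp add: algebra_simps mult.assoc)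
  ultimately show ?case
    using ff pJ qJ idempotent_add_diff_mult_mem unfolding f_def by auto
qed

lemma local_right_unit:
  assumes "c * c = c" "finite A" "\<forall>a\<in>A. a \<in> J \<and> a * c = a"
  shows "\<exists>p\<in>J. p * p = p \<and> c * p = p \<and> p * c = p \<and> (\<forall>a\<in>A. a * p = a)"
  using assms(2,3)
proof (induction A rule: finite_induct)
  case empty
  show ?case using zero_mem by (intro bexI[of _ 0]) auto
next
  case (insert a A)
  then obtain p where pJ: "p \<in> J" and pp: "p * p = p" and cp: "c * p = p" and pc: "p * c = p"
    and pA: "\<forall>a\<in>A. a * p = a" by auto
  have aJ: "a \<in> J" and ac: "a * c = a" using insert.prems by auto
  define b where "b = a - a * p"
  obtain x where bxb: "b * x * b = b" using regular by blast
  define q where "q = c * x * b"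
  have bc: "b * c = b" and bp: "b * p = 0"
    unfolding b_def using ac pc pp by (simp_all add: left_diff_distrib mult.assoc)
  have qJ: "q \<in> J" unfolding q_def b_def using aJ pJ by (intro mult_left_mem diff_mem mult_right_mem)
  have qq: "q * q = q" and cq: "c * q = q" and qc: "q * c = q" and bq: "b * q = b" and qp: "q * p = 0"
    unfolding q_def using bc bxb bp assms(1) by (simp_all flip: mult.assoc) (simp_all add: mult.assoc)
  define f where "f = q + p - p * q"
  have ff: "f * f = f"
    unfolding f_def using pp qq qp by (intro idempotent_add_diff_mult) simp_all
  have pf: "p * f = p" and bf: "b * f = b"
    unfolding f_def using pp qp bq bp by (simp_all add: algebra_simps mult.assoc) (simp_all flip: mult.assoc)
  have "a * f = a * p * f + b * f"
    unfolding b_def by (simp add: left_diff_distrib mult.assoc)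
  then have "a * f = a" using pf bf unfolding b_def by (simp add: mult.assoc)
  moreover have "\<forall>a'\<in>A. a' * f = a'" using pA pf by (metis mult.assoc)
  moreover have "c * f = f"
    unfolding f_def using cp cq by (simp add: algebra_simps flip: mult.assoc)
  moreover have "f * c = f"
    unfolding f_def using pc qc by (simp add: algebra_simps mult.assoc)
  ultimately show ?case
    using ff pJ qJ idempotent_add_diff_mult_mem unfolding f_def by auto
qed

lemma local_unit:
  assumes cc: "c * c = c"
    and "finite L" "\<forall>a\<in>L. a \<in> J \<and> c * a = a"
    and "finite R" "\<forall>a\<in>R. a \<in> J \<and> a * c = a"
  shows "\<exists>e\<in>J. e * e = e \<and> c * e = e \<and> e * c = e \<and> (\<forall>a\<in>L. e * a = a) \<and> (\<forall>a\<in>R. a * e = a)"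
proof -
  obtain p where pJ: "p \<in> J" and pp: "p * p = p" and cp: "c * p = p" and pc: "p * c = p"
    and pL: "\<forall>a\<in>L. p * a = a"
    using local_left_unit[OF cc] assms(2,3) by blast
  obtain r where rJ: "r \<in> J" and rr: "r * r = r" and cr: "c * r = r" and rc: "r * c = r"
    and rR: "\<forall>a\<in>insert p R. a * r = a"
    using local_right_unit[OF cc, of "insert p R"] assms(4,5) pJ pc by blast
  have pr: "p * r = p" using rR by simp
  define e where "e = p + r - r * p"
  have "e * e = e"
    unfolding e_def using pp rr pr by (intro idempotent_add_diff_mult) simp_all
  moreover have "c * e = e"
    unfolding e_def using cp cr by (simp add: algebra_simps flip: mult.assoc)
  moreover have "e * c = e"
    unfolding e_def using pc rc by (simp add: algebra_simps mult.assoc)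
  moreover have "\<forall>a\<in>L. e * a = a"
    unfolding e_def using pL by (simp add: algebra_simps mult.assoc)
  moreover have "\<forall>a\<in>R. a * e = a"
    unfolding e_def using rR by (simp add: algebra_simps flip: mult.assoc)
  ultimately show ?thesis
    using pJ rJ idempotent_add_diff_mult_mem unfolding e_def by auto
qed

end

lemma regular_ring_idealI:
  assumes "is_algebra sm" "regular_ring TYPE('r::ring_1)" "alg_ideal sm (J :: 'r set)"
  shows "regular_ring_ideal J"
proof -
  interpret Modules.module sm
    using assms(1) by (simp add: is_algebra_def module_iff_vector_space)
  show ?thesis
    using assms(2,3) by unfold_locales (auto simp: regular_ring_def alg_ideal_def subspace_def)
qed

locale matrix_units =
  fixes ns :: "nat list" and E :: "nat \<Rightarrow> nat \<Rightarrow> nat \<Rightarrow> 'r::ring_1"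
  assumes sizes_pos: "k < length ns \<Longrightarrow> 0 < ns ! k"
    and unit_mult: "\<lbrakk>k < length ns; i < ns ! k; j < ns ! k; k' < length ns; l < ns ! k'; m < ns ! k'\<rbrakk>
      \<Longrightarrow> E k i j * E k' l m = (if k = k' \<and> j = l then E k i m else 0)"
begin

definition diag_index :: "(nat \<times> nat) set" where
  "diag_index = Sigma {..<length ns} (\<lambda>k. {..<ns ! k})"

lemma mem_diag_index [simp]: "(k, i) \<in> diag_index \<longleftrightarrow> k < length ns \<and> i < ns ! k"
  by (simp add: diag_index_def)

lemma finite_diag_index [simp]: "finite diag_index"
  by (simp add: diag_index_def)

definition unit_sum :: 'r where
  "unit_sum = (\<Sum>(k, i)\<in>diag_index. E k i i)"

text \<open>\<open>unit_sum\<close> is the identity of the ring spanned by the matrix units, which need not be \<open>1\<close>.\<close>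

definition unit_compl :: 'r where
  "unit_compl = 1 - unit_sum"

lemma unit_sum_mult_unit:
  assumes "k < length ns" "a < ns ! k" "b < ns ! k"
  shows "unit_sum * E k a b = E k a b"
proof -
  have "unit_sum * E k a b = (\<Sum>x\<in>diag_index. if x = (k, a) then E k a b else 0)"
    unfolding unit_sum_def sum_distrib_right
    by (intro sum.cong) (auto simp: assms unit_mult split: if_splits)
  then show ?thesis using assms by (simp add: sum.delta')
qed

lemma unit_mult_unit_sum:
  assumes "k < length ns" "a < ns ! k" "b < ns ! k"
  shows "E k a b * unit_sum = E k a b"
proof -
  have "E k a b * unit_sum = (\<Sum>x\<in>diag_index. if x = (k, b) then E k a b else 0)"
    unfolding unit_sum_def sum_distrib_left
    by (intro sum.cong) (auto simp: assms unit_mult split: if_splits)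
  then show ?thesis using assms by (simp add: sum.delta')
qed

lemma unit_compl_mult_unit: "\<lbrakk>k < length ns; a < ns ! k; b < ns ! k\<rbrakk> \<Longrightarrow> unit_compl * E k a b = 0"
  and unit_mult_unit_compl: "\<lbrakk>k < length ns; a < ns ! k; b < ns ! k\<rbrakk> \<Longrightarrow> E k a b * unit_compl = 0"
  by (simp_all add: unit_compl_def algebra_simps unit_sum_mult_unit unit_mult_unit_sum)

lemma unit_compl_idem: "unit_compl * unit_compl = unit_compl"
proof -
  have "unit_sum * unit_sum = (\<Sum>(k, i)\<in>diag_index. unit_sum * E k i i)"
    by (subst (2) unit_sum_def) (simp add: sum_distrib_left case_prod_unfold)
  also have "\<dots> = (\<Sum>(k, i)\<in>diag_index. E k i i)"
    by (intro sum.cong) (auto simp: unit_sum_mult_unit)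
  finally have "unit_sum * unit_sum = unit_sum"
    by (metis unit_sum_def)
  then show ?thesis by (simp add: unit_compl_def algebra_simps)
qed

lemma eq_if_mult_units_eq:
  assumes "\<And>k i. k < length ns \<Longrightarrow> i < ns ! k \<Longrightarrow> x * E k i i = y * E k i i"
    and "x * unit_compl = y * unit_compl"
  shows "x = y"
proof -
  have decomp: "z = (\<Sum>(k, i)\<in>diag_index. z * E k i i) + z * unit_compl" for z
  proof -
    have "z = z * unit_sum + z * unit_compl"
      by (simp add: unit_compl_def algebra_simps)
    then show ?thesis
      by (simp add: unit_sum_def sum_distrib_left case_prod_unfold)
  qed
  have "(\<Sum>(k, i)\<in>diag_index. x * E k i i) = (\<Sum>(k, i)\<in>diag_index. y * E k i i)"
    by (intro sum.cong) (auto simp: assms(1))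
  then show ?thesis
    using decomp[of x] decomp[of y] assms(2) by simp
qed

lemma eq_if_units_mult_eq:
  assumes "\<And>k i. k < length ns \<Longrightarrow> i < ns ! k \<Longrightarrow> E k i i * x = E k i i * y"
    and "unit_compl * x = unit_compl * y"
  shows "x = y"
proof -
  have decomp: "z = (\<Sum>(k, i)\<in>diag_index. E k i i * z) + unit_compl * z" for z
  proof -
    have "z = unit_sum * z + unit_compl * z"
      by (simp add: unit_compl_def algebra_simps)
    then show ?thesis
      by (simp add: unit_sum_def sum_distrib_right case_prod_unfold)
  qed
  have "(\<Sum>(k, i)\<in>diag_index. E k i i * x) = (\<Sum>(k, i)\<in>diag_index. E k i i * y)"
    by (intro sum.cong) (auto simp: assms(1))
  then show ?thesis
    using decomp[of x] decomp[of y] assms(2) by simp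
qed

text \<open>Elements of this form, with \<open>f k\<close> in the corner \<open>E k 0 0 * R * E k 0 0\<close> and \<open>f0\<close> in
  \<open>unit_compl * R * unit_compl\<close>, are exactly the elements commuting with all matrix units.\<close>

definition centralizing_elem :: "(nat \<Rightarrow> 'r) \<Rightarrow> 'r \<Rightarrow> 'r" where
  "centralizing_elem f f0 = (\<Sum>(k, i)\<in>diag_index. E k i 0 * f k * E k 0 i) + f0"

context
  fixes f :: "nat \<Rightarrow> 'r" and f0 :: 'r
  assumes corner_left: "k < length ns \<Longrightarrow> E k 0 0 * f k = f k"
    and corner_right: "k < length ns \<Longrightarrow> f k * E k 0 0 = f k"
    and compl_left: "unit_compl * f0 = f0"
    and compl_right: "f0 * unit_compl = f0"
begin

lemma centralizing_elem_mult_unit: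
  assumes "k < length ns" "a < ns ! k" "b < ns ! k"
  shows "centralizing_elem f f0 * E k a b = E k a 0 * f k * E k 0 b"
proof -
  have "f0 * E k a b = f0 * (unit_compl * E k a b)"
    using compl_right by (metis mult.assoc)
  then have "f0 * E k a b = 0"
    using unit_compl_mult_unit[OF assms] by simp
  moreover have "(\<Sum>(k', i)\<in>diag_index. E k' i 0 * f k' * E k' 0 i) * E k a b
      = (\<Sum>x\<in>diag_index. if x = (k, a) then E k a 0 * f k * E k 0 b else 0)"
    unfolding sum_distrib_right
    by (intro sum.cong) (auto simp: assms sizes_pos mult.assoc unit_mult split: if_splits)
  ultimately show ?thesis
    using assms by (simp add: centralizing_elem_def distrib_right sum.delta')
qed

lemma unit_mult_centralizing_elem:
  assumes "k < length ns" "a < ns ! k" "b < ns ! k"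
  shows "E k a b * centralizing_elem f f0 = E k a 0 * f k * E k 0 b"
proof -
  have "E k a b * f0 = (E k a b * unit_compl) * f0"
    using compl_left by (metis mult.assoc)
  then have "E k a b * f0 = 0"
    using unit_mult_unit_compl[OF assms] by simp
  moreover have "E k a b * (\<Sum>(k', i)\<in>diag_index. E k' i 0 * f k' * E k' 0 i)
      = (\<Sum>x\<in>diag_index. if x = (k, b) then E k a 0 * f k * E k 0 b else 0)"
    unfolding sum_distrib_left
    by (intro sum.cong) (auto simp: assms sizes_pos unit_mult simp flip: mult.assoc split: if_splits)
  ultimately show ?thesis
    using assms by (simp add: centralizing_elem_def distrib_left sum.delta')
qed

lemma centralizing_elem_mult_unit_compl: "centralizing_elem f f0 * unit_compl = f0"
  and unit_compl_mult_centralizing_elem: "unit_compl * centralizing_elem f f0 = f0"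
proof -
  have "E k i 0 * f k * E k 0 i * unit_compl = 0" "unit_compl * (E k i 0 * f k * E k 0 i) = 0"
    if "(k, i) \<in> diag_index" for k i
    using that sizes_pos[of k] by (simp_all add: mult.assoc unit_mult_unit_compl unit_compl_mult_unit
        flip: mult.assoc[of unit_compl])
  then show "centralizing_elem f f0 * unit_compl = f0" "unit_compl * centralizing_elem f f0 = f0"
    unfolding centralizing_elem_def distrib_left distrib_right sum_distrib_left sum_distrib_right
    using compl_left compl_right by (auto intro!: sum.neutral)
qed

lemma centralizing_elem_idem:
  assumes "\<And>k. k < length ns \<Longrightarrow> f k * f k = f k" and "f0 * f0 = f0"
  shows "centralizing_elem f f0 * centralizing_elem f f0 = centralizing_elem f f0"
    (is "?c * ?c = ?c")
proof (rule eq_if_mult_units_eq)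
  fix k i assume ki: "k < length ns" "i < ns ! k"
  have "?c * ?c * E k i i = ?c * (E k i 0 * f k * E k 0 i)"
    using ki by (simp add: centralizing_elem_mult_unit mult.assoc[of ?c])
  also have "\<dots> = (?c * E k i 0) * f k * E k 0 i"
    by (simp only: mult.assoc)
  also have "\<dots> = E k i 0 * f k * E k 0 0 * f k * E k 0 i"
    using ki sizes_pos by (simp only: centralizing_elem_mult_unit)
  also have "\<dots> = E k i 0 * f k * E k 0 i"
    using ki assms(1) corner_right by (metis mult.assoc)
  also have "\<dots> = ?c * E k i i"
    using ki by (simp add: centralizing_elem_mult_unit)
  finally show "?c * ?c * E k i i = ?c * E k i i" .
next
  have "?c * f0 = ?c * unit_compl * f0"
    using compl_left by (simp add: mult.assoc)
  then show "?c * ?c * unit_compl = ?c * unit_compl"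
    using assms(2) by (simp add: mult.assoc centralizing_elem_mult_unit_compl)
qed

lemma centralizing_elem_mult_eq:
  assumes "\<And>k i. k < length ns \<Longrightarrow> i < ns ! k \<Longrightarrow> f k * (E k 0 i * y) = E k 0 i * y"
    and "f0 * (unit_compl * y) = unit_compl * y"
  shows "centralizing_elem f f0 * y = y"
proof (rule eq_if_units_mult_eq)
  fix k i assume ki: "k < length ns" "i < ns ! k"
  have "E k i i * (centralizing_elem f f0 * y) = E k i 0 * (f k * (E k 0 i * y))"
    using ki by (simp add: unit_mult_centralizing_elem mult.assoc flip: mult.assoc[of "E k i i"])
  also have "\<dots> = E k i i * y"
    using ki sizes_pos assms(1) by (simp add: unit_mult flip: mult.assoc)
  finally show "E k i i * (centralizing_elem f f0 * y) = E k i i * y" .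
next
  have "f0 * y = f0 * (unit_compl * y)"
    using compl_right by (metis mult.assoc)
  then show "unit_compl * (centralizing_elem f f0 * y) = unit_compl * y"
    using assms(2) by (simp add: unit_compl_mult_centralizing_elem flip: mult.assoc)
qed

lemma mult_centralizing_elem_eq:
  assumes "\<And>k i. k < length ns \<Longrightarrow> i < ns ! k \<Longrightarrow> y * E k i 0 * f k = y * E k i 0"
    and "y * unit_compl * f0 = y * unit_compl"
  shows "y * centralizing_elem f f0 = y"
proof (rule eq_if_mult_units_eq)
  fix k i assume ki: "k < length ns" "i < ns ! k"
  have "y * centralizing_elem f f0 * E k i i = y * E k i 0 * f k * E k 0 i"
    using ki by (simp add: centralizing_elem_mult_unit mult.assoc)
  also have "\<dots> = y * E k i i"
    using ki sizes_pos assms(1) by (simp add: unit_mult mult.assoc)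
  finally show "y * centralizing_elem f f0 * E k i i = y * E k i i" .
next
  have "y * f0 = y * unit_compl * f0"
    using compl_left by (metis mult.assoc)
  then show "y * centralizing_elem f f0 * unit_compl = y * unit_compl"
    using assms(2) by (simp add: centralizing_elem_mult_unit_compl mult.assoc)
qed

end

end

locale regular_ring_ideal_matrix_units = regular_ring_ideal J + matrix_units ns E
  for J :: "'r::ring_1 set" and ns :: "nat list" and E :: "nat \<Rightarrow> nat \<Rightarrow> nat \<Rightarrow> 'r"
begin

lemma corner_local_unit:
  assumes k: "k < length ns" and Y: "finite Y" "Y \<subseteq> J"
  shows "\<exists>g. g \<in> J \<and> g * g = g \<and> E k 0 0 * g = g \<and> g * E k 0 0 = g \<and>
    (\<forall>i<ns ! k. \<forall>y\<in>Y. g * (E k 0 i * y) = E k 0 i * y \<and> y * E k i 0 * g = y * E k i 0)"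
proof -
  have "\<exists>g\<in>J. g * g = g \<and> E k 0 0 * g = g \<and> g * E k 0 0 = g \<and>
      (\<forall>a\<in>(\<lambda>(i, y). E k 0 i * y) ` ({..<ns ! k} \<times> Y). g * a = a) \<and>
      (\<forall>a\<in>(\<lambda>(i, y). y * E k i 0) ` ({..<ns ! k} \<times> Y). a * g = a)"
  proof (rule local_unit)
    show "E k 0 0 * E k 0 0 = E k 0 0"
      using k sizes_pos by (simp add: unit_mult)
    show "\<forall>a\<in>(\<lambda>(i, y). E k 0 i * y) ` ({..<ns ! k} \<times> Y). a \<in> J \<and> E k 0 0 * a = a"
      using Y k sizes_pos by (auto simp: unit_mult mult_left_mem simp flip: mult.assoc)
    show "\<forall>a\<in>(\<lambda>(i, y). y * E k i 0) ` ({..<ns ! k} \<times> Y). a \<in> J \<and> a * E k 0 0 = a"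
      using Y k sizes_pos by (auto simp: unit_mult mult_right_mem mult.assoc)
  qed (use Y in auto)
  then show ?thesis by auto
qed

lemma compl_local_unit:
  assumes "finite Y" "Y \<subseteq> J"
  shows "\<exists>g. g \<in> J \<and> g * g = g \<and> unit_compl * g = g \<and> g * unit_compl = g \<and>
    (\<forall>y\<in>Y. g * (unit_compl * y) = unit_compl * y \<and> y * unit_compl * g = y * unit_compl)"
proof -
  have "\<exists>g\<in>J. g * g = g \<and> unit_compl * g = g \<and> g * unit_compl = g \<and>
      (\<forall>a\<in>(\<lambda>y. unit_compl * y) ` Y. g * a = a) \<and> (\<forall>a\<in>(\<lambda>y. y * unit_compl) ` Y. a * g = a)"
    using assms unit_compl_idem
    by (intro local_unit) (auto simp: mult_left_mem mult_right_mem mult.assoc simp flip: mult.assoc[of unit_compl])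
  then show ?thesis by auto
qed

lemma local_unit_commuting_with_units:
  assumes Y: "finite Y" "Y \<subseteq> J"
  shows "\<exists>e\<in>J. e * e = e \<and> (\<forall>k<length ns. \<forall>i<ns ! k. \<forall>j<ns ! k. e * E k i j = E k i j * e) \<and>
    (\<forall>y\<in>Y. e * y = y \<and> y * e = y)"
proof -
  obtain f where f: "\<And>k. k < length ns \<Longrightarrow> f k \<in> J \<and> f k * f k = f k \<and>
      E k 0 0 * f k = f k \<and> f k * E k 0 0 = f k \<and>
      (\<forall>i<ns ! k. \<forall>y\<in>Y. f k * (E k 0 i * y) = E k 0 i * y \<and> y * E k i 0 * f k = y * E k i 0)"
    using corner_local_unit[OF _ Y] by metis
  obtain f0 where f0: "f0 \<in> J" "f0 * f0 = f0" "unit_compl * f0 = f0" "f0 * unit_compl = f0"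
    "\<forall>y\<in>Y. f0 * (unit_compl * y) = unit_compl * y \<and> y * unit_compl * f0 = y * unit_compl"
    using compl_local_unit[OF Y] by blast
  have centralizing: "\<And>k. k < length ns \<Longrightarrow> E k 0 0 * f k = f k" "\<And>k. k < length ns \<Longrightarrow> f k * E k 0 0 = f k"
    "unit_compl * f0 = f0" "f0 * unit_compl = f0"
    using f f0 by blast+
  have "E k i 0 * f k * E k 0 i \<in> J" if "k < length ns" for k i
    using f[OF that] by (intro mult_right_mem mult_left_mem) blast
  then have "centralizing_elem f f0 \<in> J"
    unfolding centralizing_elem_def using f0 by (auto intro!: add_mem sum_mem)
  moreover have "centralizing_elem f f0 * centralizing_elem f f0 = centralizing_elem f f0"
    using f f0 by (intro centralizing_elem_idem[OF centralizing]) blast+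
  moreover have "centralizing_elem f f0 * E k i j = E k i j * centralizing_elem f f0"
    if "k < length ns" "i < ns ! k" "j < ns ! k" for k i j
    using that by (simp add: centralizing_elem_mult_unit[OF centralizing] unit_mult_centralizing_elem[OF centralizing])
  moreover have "centralizing_elem f f0 * y = y \<and> y * centralizing_elem f f0 = y" if "y \<in> Y" for y
    using that f f0
    by (simp add: centralizing_elem_mult_eq[OF centralizing] mult_centralizing_elem_eq[OF centralizing])
  ultimately show ?thesis by blast
qed

end

locale matricial_iso =
  fixes sm :: "'k::field \<Rightarrow> 'r::ring_1 \<Rightarrow> 'r" and T :: "'r set"
    and ns :: "nat list" and \<phi> :: "'r \<Rightarrow> 'k mat list"
  assumes algebra: "is_algebra sm"
    and subalgebra: "subalgebra sm T"
    and sizes_pos: "\<forall>i<length ns. 0 < ns ! i"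
    and bij: "bij_betw \<phi> T (matrix_product_carrier ns)"
    and hom: "\<forall>x\<in>T. \<forall>y\<in>T. \<forall>i<length ns.
      \<phi> (x + y) ! i = \<phi> x ! i + \<phi> y ! i \<and> \<phi> (x * y) ! i = \<phi> x ! i * \<phi> y ! i"
    and scale_hom: "\<forall>a. \<forall>x\<in>T. \<forall>i<length ns. \<phi> (sm a x) ! i = a \<cdot>\<^sub>m (\<phi> x ! i)"
begin

interpretation Modules.module sm
  using algebra by (simp add: is_algebra_def module_iff_vector_space)

lemma subspace_T: "subspace T"
  using subalgebra by (simp add: subalgebra_def)

lemma mult_mem: "x \<in> T \<Longrightarrow> y \<in> T \<Longrightarrow> x * y \<in> T"
  using subalgebra by (simp add: subalgebra_def)

lemma phi_carrier: "x \<in> T \<Longrightarrow> \<phi> x \<in> matrix_product_carrier ns"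
  using bij by (auto simp: bij_betw_def)

lemma phi_dim: "x \<in> T \<Longrightarrow> p < length ns \<Longrightarrow> \<phi> x ! p \<in> carrier_mat (ns ! p) (ns ! p)"
  using phi_carrier by (simp add: matrix_product_carrier_def)

lemma eq_if_entries_eq:
  assumes "x \<in> T" "y \<in> T"
    and "\<And>p r s. p < length ns \<Longrightarrow> r < ns ! p \<Longrightarrow> s < ns ! p \<Longrightarrow> \<phi> x ! p $$ (r, s) = \<phi> y ! p $$ (r, s)"
  shows "x = y"
proof -
  have "\<phi> x = \<phi> y"
  proof (rule nth_equalityI)
    show "length (\<phi> x) = length (\<phi> y)"
      using phi_carrier assms(1,2) by (simp add: matrix_product_carrier_def)
    fix p assume "p < length (\<phi> x)"
    then have p: "p < length ns"
      using phi_carrier assms(1) by (simp add: matrix_product_carrier_def)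
    show "\<phi> x ! p = \<phi> y ! p"
      using phi_dim[OF assms(1) p] phi_dim[OF assms(2) p] assms(3)[OF p] by (intro eq_matI) auto
  qed
  then show ?thesis
    using assms(1,2) bij by (simp add: bij_betw_def inj_on_def)
qed

lemma phi_zero_entry:
  assumes "p < length ns" "r < ns ! p" "s < ns ! p"
  shows "\<phi> 0 ! p $$ (r, s) = 0"
proof -
  have "\<phi> (0 + 0) ! p = \<phi> 0 ! p + \<phi> 0 ! p"
    using hom subspace_0[OF subspace_T] assms(1) by blast
  then have "\<phi> 0 ! p $$ (r, s) = \<phi> 0 ! p $$ (r, s) + \<phi> 0 ! p $$ (r, s)"
    using phi_dim[OF subspace_0[OF subspace_T] assms(1)] assms(2,3) by (metis add_0 carrier_matD index_add_mat(1))
  then show ?thesis by (metis add_cancel_right_right)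
qed

lemma phi_sum_entry:
  assumes "\<And>a. a \<in> A \<Longrightarrow> g a \<in> T" "p < length ns" "r < ns ! p" "s < ns ! p"
  shows "\<phi> (sum g A) ! p $$ (r, s) = (\<Sum>a\<in>A. \<phi> (g a) ! p $$ (r, s))"
  using assms(1)
proof (induction A rule: infinite_finite_induct)
  case (insert a A)
  then have "g a \<in> T" and sum_T: "sum g A \<in> T"
    by (auto intro!: subspace_sum[OF subspace_T])
  then show ?case
    using insert hom assms(2-4) phi_dim[OF sum_T assms(2)] by simp
qed (use phi_zero_entry assms(2-4) in simp_all)

lemma phi_mult_entry:
  assumes "x \<in> T" "y \<in> T" "p < length ns" "r < ns ! p" "s < ns ! p"
  shows "\<phi> (x * y) ! p $$ (r, s) = (\<Sum>t<ns ! p. \<phi> x ! p $$ (r, t) * \<phi> y ! p $$ (t, s))"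
proof -
  have "\<phi> (x * y) ! p = \<phi> x ! p * \<phi> y ! p"
    using hom assms(1-3) by blast
  then show ?thesis
    using phi_dim[OF assms(1,3)] phi_dim[OF assms(2,3)] assms(4,5)
    by (auto simp: scalar_prod_def lessThan_atLeast0 intro!: sum.cong)
qed

lemma phi_scale_entry:
  assumes "x \<in> T" "p < length ns" "r < ns ! p" "s < ns ! p"
  shows "\<phi> (sm a x) ! p $$ (r, s) = a * \<phi> x ! p $$ (r, s)"
  using scale_hom phi_dim[OF assms(1,2)] assms by auto

definition std_unit :: "nat \<Rightarrow> nat \<Rightarrow> nat \<Rightarrow> 'k mat list" where
  "std_unit k i j =
     map (\<lambda>p. mat (ns ! p) (ns ! p) (\<lambda>(r, s). if p = k \<and> r = i \<and> s = j then 1 else 0)) [0..<length ns]"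

definition unit_elem :: "nat \<Rightarrow> nat \<Rightarrow> nat \<Rightarrow> 'r" where
  "unit_elem k i j = inv_into T \<phi> (std_unit k i j)"

lemma unit_elem_mem: "unit_elem k i j \<in> T"
  and phi_unit_elem: "\<phi> (unit_elem k i j) = std_unit k i j"
proof -
  have "std_unit k i j \<in> matrix_product_carrier ns"
    by (simp add: std_unit_def matrix_product_carrier_def)
  then show "unit_elem k i j \<in> T" "\<phi> (unit_elem k i j) = std_unit k i j"
    unfolding unit_elem_def using bij by (auto simp: bij_betw_def f_inv_into_f inv_into_into)
qed

lemma phi_unit_elem_entry:
  "p < length ns \<Longrightarrow> r < ns ! p \<Longrightarrow> s < ns ! p \<Longrightarrow>
    \<phi> (unit_elem k i j) ! p $$ (r, s) = (if p = k \<and> r = i \<and> s = j then 1 else 0)"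
  by (simp add: phi_unit_elem std_unit_def)

lemma matrix_units_unit_elem: "matrix_units ns unit_elem"
proof
  show "k < length ns \<Longrightarrow> 0 < ns ! k" for k
    using sizes_pos by simp
  fix k i j k' l m
  assume ijk: "k < length ns" "i < ns ! k" "j < ns ! k" "k' < length ns" "l < ns ! k'" "m < ns ! k'"
  show "unit_elem k i j * unit_elem k' l m = (if k = k' \<and> j = l then unit_elem k i m else 0)"
  proof (rule eq_if_entries_eq)
    show "unit_elem k i j * unit_elem k' l m \<in> T"
      by (intro mult_mem unit_elem_mem)
    show "(if k = k' \<and> j = l then unit_elem k i m else 0) \<in> T"
      using unit_elem_mem subspace_0[OF subspace_T] by simp
    fix p r s assume prs: "p < length ns" "r < ns ! p" "s < ns ! p"
    have "\<phi> (unit_elem k i j * unit_elem k' l m) ! p $$ (r, s)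
        = (\<Sum>t<ns ! p. (if p = k \<and> r = i \<and> t = j then 1 else 0) * (if p = k' \<and> t = l \<and> s = m then 1 else 0))"
      using prs by (simp add: phi_mult_entry unit_elem_mem phi_unit_elem_entry)
    also have "\<dots> = (\<Sum>t<ns ! p. if t = j then (if p = k \<and> r = i \<and> p = k' \<and> j = l \<and> s = m then 1 else 0) else 0)"
      by (intro sum.cong) auto
    also have "\<dots> = (if p = k \<and> r = i \<and> p = k' \<and> j = l \<and> s = m then 1 else 0)"
      using ijk by (auto simp: sum.delta)
    also have "\<dots> = \<phi> (if k = k' \<and> j = l then unit_elem k i m else 0) ! p $$ (r, s)"
      using prs ijk by (auto simp: phi_unit_elem_entry phi_zero_entry)
    finally show "\<phi> (unit_elem k i j * unit_elem k' l m) ! p $$ (r, s)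
        = \<phi> (if k = k' \<and> j = l then unit_elem k i m else 0) ! p $$ (r, s)" .
  qed
qed

definition unit_index :: "(nat \<times> nat \<times> nat) set" where
  "unit_index = Sigma {..<length ns} (\<lambda>k. {..<ns ! k} \<times> {..<ns ! k})"

lemma unit_elem_expansion:
  assumes t: "t \<in> T"
  shows "t = (\<Sum>(k, i, j)\<in>unit_index. sm (\<phi> t ! k $$ (i, j)) (unit_elem k i j))"
proof (rule eq_if_entries_eq[OF t])
  show "(\<Sum>(k, i, j)\<in>unit_index. sm (\<phi> t ! k $$ (i, j)) (unit_elem k i j)) \<in> T"
    by (auto intro!: subspace_sum[OF subspace_T] subspace_scale[OF subspace_T] unit_elem_mem)
  fix p r s assume prs: "p < length ns" "r < ns ! p" "s < ns ! p"
  have "\<phi> (\<Sum>(k, i, j)\<in>unit_index. sm (\<phi> t ! k $$ (i, j)) (unit_elem k i j)) ! p $$ (r, s)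
      = (\<Sum>(k, i, j)\<in>unit_index. \<phi> (sm (\<phi> t ! k $$ (i, j)) (unit_elem k i j)) ! p $$ (r, s))"
    using prs by (subst phi_sum_entry)
      (auto simp: case_prod_unfold intro!: subspace_scale[OF subspace_T] unit_elem_mem)
  also have "\<dots> = (\<Sum>x\<in>unit_index. if x = (p, r, s) then \<phi> t ! p $$ (r, s) else 0)"
  proof (rule sum.cong)
    fix x assume "x \<in> unit_index"
    then obtain k i j where "x = (k, i, j)" "k < length ns" "i < ns ! k" "j < ns ! k"
      by (auto simp: unit_index_def)
    then show "(case x of (k, i, j) \<Rightarrow> \<phi> (sm (\<phi> t ! k $$ (i, j)) (unit_elem k i j)) ! p $$ (r, s))
        = (if x = (p, r, s) then \<phi> t ! p $$ (r, s) else 0)"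
      using prs by (auto simp: phi_scale_entry unit_elem_mem phi_unit_elem_entry)
  qed simp
  also have "\<dots> = \<phi> t ! p $$ (r, s)"
    using prs by (simp add: sum.delta' unit_index_def)
  finally show "\<phi> t ! p $$ (r, s)
      = \<phi> (\<Sum>(k, i, j)\<in>unit_index. sm (\<phi> t ! k $$ (i, j)) (unit_elem k i j)) ! p $$ (r, s)"
    by simp
qed

lemma commute_if_commute_unit_elems:
  assumes "\<And>k i j. k < length ns \<Longrightarrow> i < ns ! k \<Longrightarrow> j < ns ! k \<Longrightarrow> e * unit_elem k i j = unit_elem k i j * e"
    and t: "t \<in> T"
  shows "e * t = t * e"
proof -
  have scale_mult: "sm a (x * y) = sm a x * y" "sm a (x * y) = x * sm a y" for a x y
    using algebra unfolding is_algebra_def by metis+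
  have "e * t = (\<Sum>(k, i, j)\<in>unit_index. e * sm (\<phi> t ! k $$ (i, j)) (unit_elem k i j))"
    by (subst unit_elem_expansion[OF t]) (simp add: sum_distrib_left case_prod_unfold)
  also have "\<dots> = (\<Sum>(k, i, j)\<in>unit_index. sm (\<phi> t ! k $$ (i, j)) (unit_elem k i j) * e)"
    using assms(1) by (intro sum.cong refl) (auto simp: unit_index_def simp flip: scale_mult)
  also have "\<dots> = t * e"
    by (subst (2) unit_elem_expansion[OF t]) (simp add: sum_distrib_right case_prod_unfold)
  finally show ?thesis .
qed

end

theorem proposition3p3:
  fixes sm :: "'k::field \<Rightarrow> 'r::ring_1 \<Rightarrow> 'r"
    and J T :: "'r set"
  assumes alg: "is_algebra sm"
    and reg: "regular_ring TYPE('r)"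
    and ideal: "alg_ideal sm J"
    and sub: "subalgebra sm T"
    and mat: "matricial sm T"
    and sum: "\<forall>x. \<exists>t\<in>T. \<exists>j\<in>J. x = t + j"
    and direct: "T \<inter> J = {0}"
  shows "\<forall>Y. finite Y \<and> Y \<subseteq> J \<longrightarrow>
           (\<exists>e\<in>J. e * e = e \<and> Y \<subseteq> {e * j * e | j. j \<in> J} \<and> (\<forall>t\<in>T. e * t = t * e))"
proof (intro allI impI)
  fix Y assume "finite Y \<and> Y \<subseteq> J"
  then have Y: "finite Y" "Y \<subseteq> J" by auto
  obtain ns and \<phi> :: "'r \<Rightarrow> 'k mat list" where "\<forall>i<length ns. 0 < ns ! i"
    "bij_betw \<phi> T (matrix_product_carrier ns)"
    "\<forall>x\<in>T. \<forall>y\<in>T. \<forall>i<length ns. \<phi> (x + y) ! i = \<phi> x ! i + \<phi> y ! i \<and> \<phi> (x * y) ! i = \<phi> x ! i * \<phi> y ! i"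
    "\<forall>a. \<forall>x\<in>T. \<forall>i<length ns. \<phi> (sm a x) ! i = a \<cdot>\<^sub>m (\<phi> x ! i)"
    using mat unfolding matricial_def by blast
  with alg sub interpret matricial_iso sm T ns \<phi>
    by unfold_locales
  obtain e where "e \<in> J" "e * e = e"
    and units: "\<forall>k<length ns. \<forall>i<ns ! k. \<forall>j<ns ! k. e * unit_elem k i j = unit_elem k i j * e"
    and fixes_Y: "\<forall>y\<in>Y. e * y = y \<and> y * e = y"
    using regular_ring_ideal_matrix_units.local_unit_commuting_with_units[OF _ Y]
      regular_ring_idealI[OF alg reg ideal] matrix_units_unit_elem
    unfolding regular_ring_ideal_matrix_units_def by blast
  have "y = e * y * e" if "y \<in> Y" for y
    using fixes_Y that by simp
  then have "Y \<subseteq> {e * j * e | j. j \<in> J}"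
    using Y by blast
  moreover have "\<forall>t\<in>T. e * t = t * e"
    using units by (blast intro: commute_if_commute_unit_elems)
  ultimately show "\<exists>e\<in>J. e * e = e \<and> Y \<subseteq> {e * j * e | j. j \<in> J} \<and> (\<forall>t\<in>T. e * t = t * e)"
    using \<open>e \<in> J\<close> \<open>e * e = e\<close> by blast
qed

end
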